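(* Let $n\ge 2$ and $\lambda>0$. Then the CUSUM classifier $h^{\mathrm{CUSUM}}_\lambda:\mathbb{R}^n\to\{0,1\}$, $h^{\mathrm{CUSUM}}_\lambda(\boldsymbol{x})=\mathbb{1}\{\|\mathcal{C}(\boldsymbol{x})\|_\infty>\lambda\}$, belongs to $\mathcal{H}_{1,2n-2}$.
   Context: For $i\in[n-1]$ let $\boldsymbol{v}_i=\bigl(\sqrt{\tfrac{n-i}{in}}\boldsymbol{1}_i^\top,\,-\sqrt{\tfrac{i}{(n-i)n}}\boldsymbol{1}_{n-i}^\top\bigr)^\top\in\mathbb{R}^n$, where $\boldsymbol{1}_k$ is the all-ones vector of length $k$, and define the CUSUM transformation $\mathcal{C}(\boldsymbol{x})=(\boldsymbol{v}_1^\top\boldsymbol{x},\ldots,\boldsymbol{v}_{n-1}^\top\boldsymbol{x})^\top$. Neural network classes: for $L\ge1$ and widths $\boldsymbol{m}=(m_1,\ldots,m_L)$, set $m_0=n$, $m_{L+1}=1$; for $\boldsymbol{b}\in\mathbb{R}^r$ let $\sigma_{\boldsymbol{b}}(y_1,\ldots,y_r)=(\max(y_1-b_1,0),\ldots,\max(y_r-b_r,0))$. $\mathcal{H}_{L,\boldsymbol{m}}$ is the class of all functions $h:\mathbb{R}^n\to\{0,1\}$ of the form $h(\boldsymbol{x})=\sigma^*_\lambda W_L\sigma_{\boldsymbol{b}_L}W_{L-1}\sigma_{\boldsymbol{b}_{L-1}}\cdots W_1\sigma_{\boldsymbol{b}_1}W_0\boldsymbol{x}$, where $\sigma^*_\lambda(x)=\mathbb{1}\{x>\lambda\}$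 with $\lambda>0$, $W_\ell\in\mathbb{R}^{m_{\ell+1}\times m_\ell}$ for $\ell=0,\ldots,L$, and $\boldsymbol{b}_\ell\in\mathbb{R}^{m_\ell}$. $\mathcal{H}_{1,m}$ denotes the class with one hidden layer of width $m$. *)

theory Defs
  imports Complex_Main
begin

text \<open>Vectors in R^k are represented as functions nat => real, of which only
  the coordinates 0..k-1 are used; matrices as nat => nat => real.\<close>

definition matvec :: "(nat \<Rightarrow> nat \<Rightarrow> real) \<Rightarrow> nat \<Rightarrow> (nat \<Rightarrow> real) \<Rightarrow> (nat \<Rightarrow> real)" where
  "matvec W m y = (\<lambda>i. \<Sum>j<m. W i j * y j)"

definition relu_shift :: "(nat \<Rightarrow> real) \<Rightarrow> (nat \<Rightarrow> real) \<Rightarrow> (nat \<Rightarrow> real)" where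
  "relu_shift b y = (\<lambda>i. max (y i - b i) 0)"

fun net_eval :: "(nat \<Rightarrow> nat \<Rightarrow> real) list \<Rightarrow> (nat \<Rightarrow> real) list \<Rightarrow> nat list
                  \<Rightarrow> (nat \<Rightarrow> real) \<Rightarrow> (nat \<Rightarrow> real)" where
  "net_eval (W # Ws) (b # bs) (m # ms) z = net_eval Ws bs ms (matvec W m (relu_shift b z))"
| "net_eval _ _ _ z = z"

definition nn_class :: "nat \<Rightarrow> nat list \<Rightarrow> nat \<Rightarrow> ((nat \<Rightarrow> real) \<Rightarrow> nat) set" where
  "nn_class L ms n = {h. 1 \<le> L \<and> length ms = L \<and>
     (\<exists>lam W0 Ws bs. lam > 0 \<and> length Ws = L \<and> length bs = L \<and>
        (\<forall>x. h x = (if net_eval Ws bs ms (matvec W0 n x) 0 > lam then 1 else 0)))}"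

text \<open>CUSUM vectors v_i, i in 1..n-1, with coordinates j = 0..n-1 (0-based).\<close>
definition cusum_v :: "nat \<Rightarrow> nat \<Rightarrow> nat \<Rightarrow> real" where
  "cusum_v n i j = (if j < i then sqrt ((real n - real i) / (real i * real n))
                    else - sqrt (real i / ((real n - real i) * real n)))"

definition cusum :: "nat \<Rightarrow> (nat \<Rightarrow> real) \<Rightarrow> nat \<Rightarrow> real" where
  "cusum n x i = (\<Sum>j<n. cusum_v n i j * x j)"

definition h_cusum :: "nat \<Rightarrow> real \<Rightarrow> (nat \<Rightarrow> real) \<Rightarrow> nat" where
  "h_cusum n lam x = (if Max ((\<lambda>i. \<bar>cusum n x i\<bar>) ` {1..n-1}) > lam then 1 else 0)"

end

theory Submission
  imports Defs
begin

text \<open>Each hidden neuron of the network computes \<open>max (\<plusminus>v\<^sub>i\<^sup>T x + \<lambda>) 0\<close>, i.e. the rows of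
  the first weight matrix are \<open>v\<^sub>1, \<dots>, v\<^sub>n\<^sub>-\<^sub>1, -v\<^sub>1, \<dots>, -v\<^sub>n\<^sub>-\<^sub>1\<close> and all biases are \<open>-\<lambda>\<close>.
  For \<open>\<lambda> \<ge> 0\<close> a pair of such neurons sums to \<open>2\<lambda> + max (\<bar>c\<bar> - \<lambda>) 0\<close>, so the sum of
  all of them exceeds \<open>2(n-1)\<lambda>\<close> exactly when some CUSUM statistic \<open>\<bar>c\<bar>\<close> exceeds \<open>\<lambda>\<close>.\<close>

lemma relu_pair_eq:
  fixes c lam :: real
  assumes "0 \<le> lam"
  shows "max (c + lam) 0 + max (lam - c) 0 = 2 * lam + max (\<bar>c\<bar> - lam) 0"
  using assms by (auto simp: max_def abs_if)

lemma ex_abs_gt_iff_relu_pair_sum_gt: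
  fixes c :: "'a \<Rightarrow> real" and lam :: real
  assumes "finite K" and "0 \<le> lam"
  shows "(\<exists>k\<in>K. \<bar>c k\<bar> > lam) \<longleftrightarrow>
         (\<Sum>k\<in>K. max (c k + lam) 0 + max (lam - c k) 0) > 2 * lam * card K"
proof -
  have "(\<Sum>k\<in>K. max (c k + lam) 0 + max (lam - c k) 0)
        = 2 * lam * card K + (\<Sum>k\<in>K. max (\<bar>c k\<bar> - lam) 0)"
    by (simp add: relu_pair_eq[OF assms(2)] sum.distrib)
  moreover have "(\<Sum>k\<in>K. max (\<bar>c k\<bar> - lam) 0) > 0 \<longleftrightarrow> (\<exists>k\<in>K. \<bar>c k\<bar> > lam)"
    by (simp add: less_le not_le sum_nonneg sum_nonneg_eq_0_iff[OF assms(1)] max_def)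
  ultimately show ?thesis
    by linarith
qed

lemma sum_lessThan_add:
  fixes f :: "nat \<Rightarrow> 'a::comm_monoid_add"
  shows "(\<Sum>j<m + p. f j) = (\<Sum>j<m. f j) + (\<Sum>j<p. f (j + m))"
proof -
  have "(\<Sum>j<m + p. f j) = (\<Sum>j<m. f j) + (\<Sum>j\<in>{m..<m + p}. f j)"
    by (simp add: sum.atLeastLessThan_concat flip: atLeast0LessThan)
  also have "(\<Sum>j\<in>{m..<m + p}. f j) = (\<Sum>j<p. f (j + m))"
    using sum.shift_bounds_nat_ivl[of f 0 m p] by (simp add: atLeast0LessThan add.commute)
  finally show ?thesis .
qed

lemma one_hidden_layer_in_nn_class:
  fixes h :: "(nat \<Rightarrow> real) \<Rightarrow> nat" and W :: "nat \<Rightarrow> nat \<Rightarrow> real"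
    and w b :: "nat \<Rightarrow> real"
  assumes "lam > 0"
    and "\<And>x. h x = (if (\<Sum>j<m. w j * max (matvec W n x j - b j) 0) > lam then 1 else 0)"
  shows "h \<in> nn_class 1 [m] n"
proof -
  have "h x = (if net_eval [\<lambda>_. w] [b] [m] (matvec W n x) 0 > lam then 1 else 0)" for x
    by (simp add: assms(2) matvec_def relu_shift_def)
  then show ?thesis
    unfolding nn_class_def using assms(1)
    by (intro CollectI conjI exI[of _ lam] exI[of _ W] exI[of _ "[\<lambda>_. w]"] exI[of _ "[b]"]) simp_all
qed

lemma h_cusum_eq_ex_abs_gt:
  assumes "n \<ge> 2"
  shows "h_cusum n lam x = (if \<exists>k\<in>{..<n - 1}. \<bar>cusum n x (k + 1)\<bar> > lam then 1 else 0)"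
proof -
  have "{1..n - 1} \<noteq> {}"
    using assms by simp
  then have "Max ((\<lambda>i. \<bar>cusum n x i\<bar>) ` {1..n - 1}) > lam \<longleftrightarrow>
             (\<exists>i\<in>{1..n - 1}. \<bar>cusum n x i\<bar> > lam)"
    by (simp add: Max_gr_iff)
  also have "\<dots> \<longleftrightarrow> (\<exists>k\<in>{..<n - 1}. \<bar>cusum n x (k + 1)\<bar> > lam)"
    unfolding image_Suc_lessThan[symmetric] by simp
  finally show ?thesis
    unfolding h_cusum_def by simp
qed

theorem lemma3p1:
  fixes n :: nat and lam :: real
  assumes "n \<ge> 2" and "lam > 0"
  shows "h_cusum n lam \<in> nn_class 1 [2 * n - 2] n"
proof -
  define m where "m = n - 1"
  have width: "2 * n - 2 = m + m"
    unfolding m_def by simp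
  define W0 where
    "W0 = (\<lambda>j i. if j < m then cusum_v n (j + 1) i else - cusum_v n (j - m + 1) i)"
  have neuron_pair: "matvec W0 n x j = cusum n x (j + 1)"
                    "matvec W0 n x (j + m) = - cusum n x (j + 1)" if "j < m" for x j
    using that by (simp_all add: matvec_def W0_def cusum_def sum_negf)
  have "(\<Sum>j<m + m. 1 * max (matvec W0 n x j - - lam) 0)
        = (\<Sum>k<m. max (cusum n x (k + 1) + lam) 0 + max (lam - cusum n x (k + 1)) 0)" for x
    by (simp add: sum_lessThan_add neuron_pair sum.distrib add.commute[of lam])
  then have "h_cusum n lam x =
        (if (\<Sum>j<m + m. 1 * max (matvec W0 n x j - - lam) 0) > 2 * lam * real m then 1 else 0)" for x
    using ex_abs_gt_iff_relu_pair_sum_gt[of "{..<m}" lam "\<lambda>k. cusum n x (k + 1)"] assms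
    unfolding h_cusum_eq_ex_abs_gt[OF assms(1)] m_def[symmetric] by simp
  moreover have "2 * lam * real m > 0"
    using assms unfolding m_def by simp
  ultimately show ?thesis
    unfolding width
    by (intro one_hidden_layer_in_nn_class[where W = W0 and w = "\<lambda>_. 1" and b = "\<lambda>_. - lam"])
qed

end
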